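(* Let $1\le K<d$ be integers and $T_\lambda$ as below. For $\lambda\in(0,1)$ let $\bar F_\lambda$ solve $\bar F'(w)=T_\lambda(\bar F(w))-\bar F(w)$, $\bar F(0)=\lambda$, let $\mathbb E[W_\lambda]=\frac1\lambda\int_0^\infty T_\lambda(\bar F_\lambda(w))\,dw$ and $$p_\lambda=1-\sum_{j=0}^{K-1}\frac{K-j}{K}\binom dj(1-\lambda)^j\lambda^{d-j}.$$ Then $$\lim_{\lambda\to0^+}-\frac{\mathbb E[W_\lambda]}{\log(p_\lambda)}=\frac1{d-K+1}\qquad\text{and}\qquad\lim_{\lambda\to1^-}-\frac{\mathbb E[W_\lambda]}{\log(p_\lambda)}=\frac K{d-K}.$$
   Context: $T_\lambda(u)=\frac{\lambda}{K}\sum_{j=0}^{K-1}(K-j)\binom{d}{j}u^{d-j}(1-u)^j$ (LL($d,K$) policy, exponential(1) job sizes); $p_\lambda$ is the probability that a job is assigned to an idle server. *)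

theory Defs
  imports "HOL-Analysis.Analysis"
begin

definition T_LL :: "nat \<Rightarrow> nat \<Rightarrow> real \<Rightarrow> real \<Rightarrow> real" where
  "T_LL d K lam u =
     lam / real K * (\<Sum>j<K. real (K - j) * real (d choose j) * u ^ (d - j) * (1 - u) ^ j)"

definition mean_wait :: "nat \<Rightarrow> nat \<Rightarrow> real \<Rightarrow> (real \<Rightarrow> real) \<Rightarrow> real" where
  "mean_wait d K lam Fb = (1 / lam) * integral {0..} (\<lambda>w. T_LL d K lam (Fb w))"

definition p_idle :: "nat \<Rightarrow> nat \<Rightarrow> real \<Rightarrow> real" where
  "p_idle d K lam =
     1 - (\<Sum>j<K. real (K - j) / real K * real (d choose j) * (1 - lam) ^ j * lam ^ (d - j))"

end

theory Submission
  imports Defs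
begin

text \<open>Write \<open>T_LL d K lam u = lam u g(u)\<close>, so that \<open>p_lam = 1 - lam g(lam)\<close>, where
  \<open>0 \<le> g \<le> 1\<close> on \<open>[0, 1]\<close>, \<open>g(u) = u^(d-K) r(u)\<close> with \<open>r(0) > 0\<close>, and \<open>g(1) = 1\<close>,
  \<open>g'(1) = (d - K) / K\<close>. The trajectory \<open>F_lam\<close> decreases from \<open>lam\<close> to \<open>0\<close>, and the
  substitution \<open>u = F_lam(w)\<close> turns \<open>E[W_lam]\<close> into \<open>\<integral>\<^sub>0\<^sup>lam g(u) / (1 - lam g(u)) du\<close>.
  As \<open>lam \<rightarrow> 0\<close> the denominator tends to \<open>1\<close>, so \<open>E[W_lam] \<sim> \<integral>\<^sub>0\<^sup>lam g\<close>, which is of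
  order \<open>lam^(d-K+1) r(0) / (d-K+1)\<close>, while \<open>- log p_lam \<sim> lam g(lam) \<sim> lam^(d-K+1) r(0)\<close>.
  As \<open>lam \<rightarrow> 1\<close>, near \<open>u = 1\<close> the denominator is \<open>(1 - lam) + lam (1 - u) q(u)\<close> with
  \<open>q(u) = (1 - g(u)) / (1 - u) \<rightarrow> g'(1)\<close>, so \<open>E[W_lam] \<sim> - log (1 - lam) / g'(1)\<close>, while
  \<open>- log p_lam \<sim> - log (1 - lam)\<close>.\<close>

lemma binomial_mean_sum:
  fixes u :: real
  shows "(\<Sum>j\<le>d. real (d - j) * real (d choose j) * u ^ (d - j) * (1 - u) ^ j) = real d * u"
proof (cases d)
  case 0
  then show ?thesis by simp
next
  case (Suc n)
  have "(\<Sum>j\<le>d. real (d - j) * real (d choose j) * u ^ (d - j) * (1 - u) ^ j)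
      = (\<Sum>j\<le>Suc n. real d * real (n choose j) * u ^ (Suc n - j) * (1 - u) ^ j)"
  proof (rule sum.cong)
    fix j
    have "(d - j) * (d choose j) = d * (n choose j)"
      using binomial_absorb_comp[of d j] Suc by simp
    then show "real (d - j) * real (d choose j) * u ^ (d - j) * (1 - u) ^ j
        = real d * real (n choose j) * u ^ (Suc n - j) * (1 - u) ^ j"
      using Suc by (metis of_nat_mult)
  qed (simp add: Suc)
  also have "\<dots> = real d * u * (\<Sum>j\<le>n. real (n choose j) * (1 - u) ^ j * u ^ (n - j))"
    by (simp add: sum.atMost_Suc sum_distrib_left Suc_diff_le mult_ac)
  also have "\<dots> = real d * u"
    using binomial_ring[of "1 - u" u n] by simp
  finally show ?thesis .
qed

lemma minus_ln_one_minus_bounds: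
  fixes x :: real
  assumes "0 < x" "x < 1"
  shows "x \<le> - ln (1 - x)" "- ln (1 - x) \<le> x / (1 - x)"
proof -
  show "x \<le> - ln (1 - x)"
    using ln_le_minus_one[of "1 - x"] assms by simp
  have "ln (inverse (1 - x)) \<le> inverse (1 - x) - 1"
    using assms by (intro ln_le_minus_one) simp
  also have "\<dots> = x / (1 - x)"
    using assms by (simp add: field_simps)
  finally show "- ln (1 - x) \<le> x / (1 - x)"
    using assms by (simp add: ln_inverse)
qed

lemma has_integral_inverse_affine:
  fixes a b s t :: real
  assumes "0 < a" "0 < b" "s \<le> t" "t \<le> 1"
  shows "((\<lambda>u. 1 / (a + b * (1 - u))) has_integral
           (ln (a + b * (1 - s)) - ln (a + b * (1 - t))) / b) {s..t}"
proof -
  have "((\<lambda>u. 1 / (a + b * (1 - u))) has_integral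
          (- ln (a + b * (1 - t)) / b) - (- ln (a + b * (1 - s)) / b)) {s..t}"
  proof (rule fundamental_theorem_of_calculus[OF \<open>s \<le> t\<close>])
    fix u
    assume "u \<in> {s..t}"
    then have "0 < a + b * (1 - u)"
      using assms by (intro add_pos_nonneg) auto
    moreover have "((\<lambda>u. a + b * (1 - u)) has_real_derivative - b) (at u within {s..t})"
      by (auto intro!: derivative_eq_intros)
    ultimately have "((\<lambda>u. - ln (a + b * (1 - u)) / b) has_real_derivative
                 - (inverse (a + b * (1 - u)) * - b) / b) (at u within {s..t})"
      by (intro DERIV_cdivide DERIV_minus DERIV_chain2[OF DERIV_ln])
    then have "((\<lambda>u. - ln (a + b * (1 - u)) / b) has_real_derivative 1 / (a + b * (1 - u)))
               (at u within {s..t})"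
      using \<open>0 < b\<close> by (simp add: inverse_eq_divide)
    then show "((\<lambda>u. - ln (a + b * (1 - u)) / b) has_vector_derivative 1 / (a + b * (1 - u)))
               (at u within {s..t})"
      by (simp add: has_real_derivative_iff_has_vector_derivative)
  qed
  then show ?thesis
    by (simp add: diff_divide_distrib)
qed

lemma has_real_derivative_power_mult_one_minus_power_at_1:
  "((\<lambda>u::real. u ^ n * (1 - u) ^ j) has_real_derivative
      (if j = 0 then real n else if j = 1 then -1 else 0)) (at 1)"
proof -
  have "((\<lambda>u::real. u ^ n * (1 - u) ^ j) has_real_derivative
          1 ^ n * (real j * ((0 - 1) * (1 - 1) ^ (j - Suc 0))) + real n * 1 ^ (n - Suc 0) * (1 - 1) ^ j) (at 1)"
    by (intro DERIV_mult' DERIV_pow DERIV_power DERIV_diff DERIV_const DERIV_ident)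
  moreover have "(1::real) ^ n * (real j * ((0 - 1) * (1 - 1) ^ (j - Suc 0))) + real n * 1 ^ (n - Suc 0) * (1 - 1) ^ j
      = (if j = 0 then real n else if j = 1 then -1 else 0)"
    by (cases j) auto
  ultimately show ?thesis
    by simp
qed

lemma linear_ode_exp_integral:
  fixes f a :: "real \<Rightarrow> real"
  assumes "0 \<le> b" and a: "continuous_on {0..b} a"
    and f': "\<And>w. w \<in> {0..b} \<Longrightarrow> (f has_real_derivative f w * a w) (at w within {0..b})"
  shows "f b = f 0 * exp (integral {0..b} a)"
proof -
  define A where "A x = integral {0..x} a" for x
  have "\<exists>c. \<forall>x\<in>{0..b}. f x * exp (- A x) = c"
  proof (rule has_field_derivative_zero_constant)
    fix x
    assume x: "x \<in> {0..b}"
    have "(A has_real_derivative a x) (at x within {0..b})"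
      unfolding A_def by (rule integral_has_real_derivative[OF a x])
    then have "((\<lambda>x. f x * exp (- A x)) has_real_derivative
                 f x * a x * exp (- A x) + f x * (exp (- A x) * - a x)) (at x within {0..b})"
      using f'[OF x] by (auto intro!: derivative_eq_intros)
    then show "((\<lambda>x. f x * exp (- A x)) has_real_derivative 0) (at x within {0..b})"
      by (simp add: algebra_simps)
  qed simp
  then have "f b * exp (- A b) = f 0 * exp (- A 0)"
    using \<open>0 \<le> b\<close> by fastforce
  then show ?thesis
    unfolding A_def by (simp add: exp_minus field_simps)
qed

lemma le_level_if_deriv_neg_at_or_below:
  fixes f f' :: "real \<Rightarrow> real"
  assumes f': "\<And>w. 0 \<le> w \<Longrightarrow> (f has_real_derivative f' w) (at w within {0..})"
    and neg: "\<And>w. 0 \<le> w \<Longrightarrow> f w \<le> c \<Longrightarrow> f' w < 0"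
    and "f 0 \<le> c" "0 \<le> b"
  shows "f b \<le> c"
proof (rule ccontr)
  assume "\<not> f b \<le> c"
  define A where "A = {0..b} \<inter> f -` {..c}"
  have "continuous_on {0..b} f"
    using f' DERIV_continuous continuous_on_eq_continuous_within
    by (metis atLeastAtMost_iff atLeast_iff continuous_within_subset subsetI)
  then have "closed A"
    unfolding A_def by (intro continuous_closed_preimage) auto
  moreover have "0 \<in> A" "bdd_above A"
    using \<open>f 0 \<le> c\<close> \<open>0 \<le> b\<close> by (auto simp: A_def bdd_above_def)
  ultimately have "Sup A \<in> A"
    by (intro closed_contains_Sup) auto
  define s where "s = Sup A"
  have s: "0 \<le> s" "s < b" "f s \<le> c"
    using \<open>Sup A \<in> A\<close> \<open>\<not> f b \<le> c\<close> unfolding s_def A_def by (auto simp: order.order_iff_strict)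
  obtain e where "e > 0" and dec: "\<And>h. h > 0 \<Longrightarrow> s + h \<in> {0..} \<Longrightarrow> h < e \<Longrightarrow> f (s + h) < f s"
    using has_real_derivative_neg_dec_right[OF f'[OF \<open>0 \<le> s\<close>] neg[OF s(1,3)]] by blast
  define h where "h = min (e / 2) (b - s)"
  have "h > 0" "h < e"
    using \<open>e > 0\<close> s by (auto simp: h_def)
  then have "s + h \<in> A"
    using dec[of h] s by (auto simp: A_def h_def)
  then have "s + h \<le> s"
    unfolding s_def using \<open>bdd_above A\<close> by (rule cSup_upper)
  then show False
    using \<open>h > 0\<close> by simp
qed

lemma eventually_in_unit_at_right_0: "\<forall>\<^sub>F x in at_right 0. x \<in> {0<..<1::real}"
  by (rule eventually_at_right_real) simp

lemma eventually_in_unit_at_left_1: "\<forall>\<^sub>F x in at_left 1. x \<in> {0<..<1::real}"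
  by (rule eventually_at_left_real) simp

lemma ex_small_if_eventually_at_right_0:
  assumes "eventually P (at_right (0::real))" "0 < b"
  shows "\<exists>e. 0 < e \<and> e < b \<and> P e"
proof -
  have "eventually (\<lambda>e. 0 < e \<and> e < b \<and> P e) (at_right (0::real))"
    using eventually_at_right_real[OF \<open>0 < b\<close>] assms(1) by eventually_elim auto
  then show ?thesis
    by (rule eventually_happens'[OF trivial_limit_at_right_real])
qed

lemma minus_ln_one_minus_at_top: "filterlim (\<lambda>x::real. - ln (1 - x)) at_top (at_left 1)"
  by real_asymp

lemma divide_minus_ln_one_minus_tendsto_0: "((\<lambda>x::real. c / - ln (1 - x)) \<longlongrightarrow> 0) (at_left 1)"
  by (rule tendsto_divide_0[OF tendsto_const filterlim_at_top_imp_at_infinity[OF minus_ln_one_minus_at_top]])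

locale LL_policy =
  fixes d K :: nat
  assumes K_pos: "1 \<le> K" and K_less_d: "K < d"
begin

definition g :: "real \<Rightarrow> real" where
  "g u = 1 / real K * (\<Sum>j<K. real (K - j) * real (d choose j) * u ^ (d - j - 1) * (1 - u) ^ j)"

definition r :: "real \<Rightarrow> real" where
  "r u = 1 / real K * (\<Sum>j<K. real (K - j) * real (d choose j) * u ^ (K - 1 - j) * (1 - u) ^ j)"

lemma sum_power_d_minus_eq:
  fixes u :: real and c v :: "nat \<Rightarrow> real"
  shows "(\<Sum>j<K. c j * u ^ (d - j) * v j) = u * (\<Sum>j<K. c j * u ^ (d - j - 1) * v j)"
proof -
  have "u ^ (d - j) = u * u ^ (d - j - 1)" if "j < K" for j
  proof -
    have "d - j = Suc (d - j - 1)"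
      using that K_less_d by simp
    then show ?thesis
      by (metis power_Suc)
  qed
  then show ?thesis
    unfolding sum_distrib_left by (intro sum.cong) (auto simp: mult_ac)
qed

lemma T_LL_eq: "T_LL d K lam u = lam * u * g u"
  unfolding T_LL_def g_def sum_power_d_minus_eq by simp

lemma p_idle_eq: "p_idle d K lam = 1 - lam * g lam"
proof -
  have "p_idle d K lam = 1 - T_LL d K 1 lam"
    unfolding p_idle_def T_LL_def sum_distrib_left by (simp add: mult_ac)
  then show ?thesis
    by (simp add: T_LL_eq)
qed

lemma g_eq_power_mult_r: "g u = u ^ (d - K) * r u"
proof -
  have "(\<Sum>j<K. c j * u ^ (d - j - 1) * v j) = u ^ (d - K) * (\<Sum>j<K. c j * u ^ (K - 1 - j) * v j)"
    for c v :: "nat \<Rightarrow> real"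
    unfolding sum_distrib_left
    by (intro sum.cong) (use K_less_d in \<open>auto simp flip: power_add\<close>)
  then show ?thesis
    unfolding g_def r_def by simp
qed

lemma continuous_on_g [continuous_intros]:
  "continuous_on S f \<Longrightarrow> continuous_on S (\<lambda>x. g (f x))"
  unfolding g_def by (intro continuous_intros)

lemma isCont_g: "isCont g x"
  unfolding g_def by (intro continuous_intros)

lemma isCont_r: "isCont r x"
  unfolding r_def by (intro continuous_intros)

lemma g_nonneg: "0 \<le> u \<Longrightarrow> u \<le> 1 \<Longrightarrow> 0 \<le> g u"
  unfolding g_def by (intro mult_nonneg_nonneg sum_nonneg) auto

lemma g_0: "g 0 = 0"
  using K_less_d by (simp add: g_eq_power_mult_r)

text \<open>Expanding \<open>K u\<close> (by the binomial mean) and \<open>K u g u\<close> in the Bernstein basis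
  \<open>C(d,j) u^(d-j) (1-u)^j\<close> gives a difference with nonnegative coefficients; hence \<open>g \<le> 1\<close>.\<close>
lemma K_mult_one_minus_g_eq:
  "real K * u * (1 - g u) =
     (\<Sum>j\<le>d. (if j < K then real j * real (d - K) else real K * real (d - j)) / real d *
               (real (d choose j) * u ^ (d - j) * (1 - u) ^ j))"
proof -
  define b where "b j = real (d choose j) * u ^ (d - j) * (1 - u) ^ j" for j
  have Ku: "real K * u = (\<Sum>j\<le>d. real K / real d * real (d - j) * b j)"
  proof -
    have "real K * u = real K / real d *
            (\<Sum>j\<le>d. real (d - j) * real (d choose j) * u ^ (d - j) * (1 - u) ^ j)"
      using K_less_d by (subst binomial_mean_sum) simp
    then show ?thesis
      unfolding sum_distrib_left b_def by (simp add: mult_ac)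
  qed
  have Kug: "real K * u * g u = (\<Sum>j\<le>d. (if j < K then real (K - j) else 0) * b j)"
  proof -
    have "real K * u * g u = real K * T_LL d K 1 u"
      by (simp add: T_LL_eq)
    also have "\<dots> = (\<Sum>j<K. real (K - j) * b j)"
      using K_pos unfolding T_LL_def b_def by (simp add: mult_ac)
    also have "\<dots> = (\<Sum>j\<le>d. (if j < K then real (K - j) else 0) * b j)"
      using K_less_d by (intro sum.mono_neutral_cong_left) auto
    finally show ?thesis .
  qed
  have weight: "real K / real d * real (d - j) - (if j < K then real (K - j) else 0)
      = (if j < K then real j * real (d - K) else real K * real (d - j)) / real d" for j
    using K_less_d by (auto simp: of_nat_diff field_simps)
  have "real K * u * (1 - g u) = real K * u - real K * u * g u"
    by (simp add: algebra_simps)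
  also have "\<dots> = (\<Sum>j\<le>d. (real K / real d * real (d - j) - (if j < K then real (K - j) else 0)) * b j)"
    unfolding Kug unfolding Ku left_diff_distrib sum_subtractf ..
  finally show ?thesis
    unfolding weight b_def .
qed

lemma g_le_1:
  assumes "0 \<le> u" "u \<le> 1"
  shows "g u \<le> 1"
proof (cases "u = 0")
  case True
  then show ?thesis by (simp add: g_0)
next
  case False
  have "0 \<le> real K * u * (1 - g u)"
    unfolding K_mult_one_minus_g_eq using assms by (intro sum_nonneg) auto
  moreover have "0 < real K * u"
    using False assms K_pos by simp
  ultimately show ?thesis
    by (simp add: zero_le_mult_iff)
qed

lemma g_less_1:
  assumes "0 \<le> u" "u < 1"
  shows "g u < 1"
proof (cases "u = 0")
  case True
  then show ?thesis by (simp add: g_0)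
next
  case False
  let ?w = "\<lambda>j. (if j < K then real j * real (d - K) else real K * real (d - j)) / real d *
                 (real (d choose j) * u ^ (d - j) * (1 - u) ^ j)"
  have "0 < ?w 1"
    using False assms K_pos K_less_d by auto
  also have "\<dots> \<le> (\<Sum>j\<le>d. ?w j)"
    using K_less_d assms by (intro member_le_sum) auto
  finally have "0 < real K * u * (1 - g u)"
    unfolding K_mult_one_minus_g_eq .
  moreover have "0 < real K * u"
    using False assms K_pos by simp
  ultimately show ?thesis
    by (simp add: zero_less_mult_iff)
qed

lemma r_pos:
  assumes "0 \<le> u" "u < 1"
  shows "0 < r u"
proof -
  let ?t = "\<lambda>j. real (K - j) * real (d choose j) * u ^ (K - 1 - j) * (1 - u) ^ j"
  have "0 < ?t (K - 1)"
    using assms K_pos K_less_d by simp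
  also have "\<dots> \<le> (\<Sum>j<K. ?t j)"
    using assms K_pos by (intro member_le_sum) auto
  finally show ?thesis
    using K_pos by (simp add: r_def)
qed

lemma g_pos: "0 < u \<Longrightarrow> u < 1 \<Longrightarrow> 0 < g u"
  using r_pos by (simp add: g_eq_power_mult_r)

lemma g_1: "g 1 = 1"
proof -
  have "(\<Sum>j<K. real (K - j) * real (d choose j) * 1 ^ (d - j - 1) * (1 - 1) ^ j)
      = (\<Sum>j\<in>{0}. real (K - j) * real (d choose j) * (1::real) ^ (d - j - 1) * (1 - 1) ^ j)"
    using K_pos by (intro sum.mono_neutral_right) auto
  then show ?thesis
    unfolding g_def using K_pos by simp
qed

definition q1 :: real where
  "q1 = real (d - K) / real K"

lemma q1_pos: "0 < q1"
  using K_pos K_less_d by (simp add: q1_def)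

lemma g_has_derivative_at_1: "(g has_real_derivative q1) (at 1)"
proof -
  define c where "c j = real (K - j) * real (d choose j)" for j
  define D where "D j = (if j = 0 then real (d - j - 1) else if j = 1 then -1 else 0 :: real)" for j
  have "g = (\<lambda>u. 1 / real K * (\<Sum>j<K. c j * (u ^ (d - j - 1) * (1 - u) ^ j)))"
    unfolding g_def c_def by (simp add: mult_ac)
  moreover have "((\<lambda>u. 1 / real K * (\<Sum>j<K. c j * (u ^ (d - j - 1) * (1 - u) ^ j)))
      has_real_derivative 1 / real K * (\<Sum>j<K. c j * D j)) (at 1)"
    unfolding D_def
    by (intro DERIV_cmult DERIV_sum has_real_derivative_power_mult_one_minus_power_at_1)
  moreover have "(\<Sum>j<K. c j * D j) = real (d - K)"
  proof (cases "K = 1")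
    case True
    then show ?thesis
      by (simp add: c_def D_def)
  next
    case False
    then have "(\<Sum>j<K. c j * D j) = (\<Sum>j<2. c j * D j)"
      using K_pos by (intro sum.mono_neutral_right) (auto simp: D_def)
    also have "\<dots> = real K * real (d - 1) - real (K - 1) * real d"
      by (simp add: c_def D_def numeral_2_eq_2)
    also have "\<dots> = real (d - K)"
      using False K_pos K_less_d by (simp add: of_nat_diff algebra_simps)
    finally show ?thesis .
  qed
  ultimately show ?thesis
    by (simp add: q1_def)
qed

definition q :: "real \<Rightarrow> real" where
  "q u = (1 - g u) / (1 - u)"

lemma q_nonneg: "0 \<le> u \<Longrightarrow> u < 1 \<Longrightarrow> 0 \<le> q u"
  unfolding q_def using g_le_1[of u] by simp

lemma one_minus_mult_g_eq: "u < 1 \<Longrightarrow> 1 - x * g u = (1 - x) + x * (1 - u) * q u"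
  unfolding q_def by (simp add: field_simps)

lemma q_tendsto_at_left_1: "(q \<longlongrightarrow> q1) (at_left 1)"
proof -
  have "((\<lambda>u. (g u - g 1) / (u - 1)) \<longlongrightarrow> q1) (at 1)"
    using g_has_derivative_at_1 unfolding has_field_derivative_iff by simp
  then have "((\<lambda>u. (g u - g 1) / (u - 1)) \<longlongrightarrow> q1) (at_left 1)"
    by (rule filterlim_mono) (simp_all add: at_le)
  moreover have "(g u - g 1) / (u - 1) = q u" for u
    unfolding q_def g_1 by (metis minus_diff_eq minus_divide_divide)
  ultimately show ?thesis
    by simp
qed

definition wait_primitive :: "real \<Rightarrow> real \<Rightarrow> real" where
  "wait_primitive lam x = integral {0..x} (\<lambda>u. g u / (1 - lam * g u))"

lemma one_minus_le_one_minus_mult_g: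
  "0 \<le> lam \<Longrightarrow> 0 \<le> u \<Longrightarrow> u \<le> 1 \<Longrightarrow> 1 - lam \<le> 1 - lam * g u"
  using mult_left_le[OF g_le_1, of u lam] by simp

lemma continuous_on_wait_integrand:
  assumes "0 \<le> lam" "lam < 1"
  shows "continuous_on {0..1} (\<lambda>u. g u / (1 - lam * g u))"
  using one_minus_le_one_minus_mult_g assms by (intro continuous_intros) fastforce+

lemma wait_integrand_integrable:
  "0 \<le> lam \<Longrightarrow> lam < 1 \<Longrightarrow> 0 \<le> a \<Longrightarrow> b \<le> 1 \<Longrightarrow>
    (\<lambda>u. g u / (1 - lam * g u)) integrable_on {a..b}"
  by (rule integrable_continuous_real, rule continuous_on_subset[OF continuous_on_wait_integrand]) auto

lemma wait_primitive_has_derivative: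
  assumes "0 \<le> lam" "lam < 1" "0 < x" "x < 1"
  shows "(wait_primitive lam has_real_derivative g x / (1 - lam * g x)) (at x)"
proof -
  have "(wait_primitive lam has_real_derivative g x / (1 - lam * g x)) (at x within {0..1})"
    unfolding wait_primitive_def[abs_def] using assms
    by (intro integral_has_real_derivative continuous_on_wait_integrand) auto
  then show ?thesis
    using assms by (simp add: at_within_Icc_at)
qed

lemma wait_primitive_tendsto_0:
  assumes "0 \<le> lam" "lam < 1"
  shows "(wait_primitive lam \<longlongrightarrow> 0) (at_right 0)"
proof -
  have "continuous_on {0..1} (wait_primitive lam)"
    unfolding wait_primitive_def[abs_def] using assms
    by (intro indefinite_integral_continuous_1 integrable_continuous_real continuous_on_wait_integrand)
  then have "(wait_primitive lam \<longlongrightarrow> wait_primitive lam 0) (at 0 within {0..1})"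
    unfolding continuous_on_def by simp
  then show ?thesis
    by (simp add: wait_primitive_def at_within_Icc_at_right)
qed

end

section \<open>The fluid trajectory\<close>

locale LL_trajectory = LL_policy +
  fixes lam :: real and f :: "real \<Rightarrow> real"
  assumes lam_pos: "0 < lam" and lam_less_1: "lam < 1" and f_0: "f 0 = lam"
    and f_deriv_T_LL: "\<And>w. 0 \<le> w \<Longrightarrow>
      (f has_real_derivative T_LL d K lam (f w) - f w) (at w within {0..})"
begin

lemma f_deriv:
  "0 \<le> w \<Longrightarrow> (f has_real_derivative f w * (lam * g (f w) - 1)) (at w within {0..})"
  using f_deriv_T_LL by (simp add: T_LL_eq algebra_simps)

lemma continuous_on_f: "continuous_on {0..} f"
  unfolding continuous_on_eq_continuous_within
  using f_deriv DERIV_continuous by (metis atLeast_iff)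

lemma f_eq_exp_integral:
  assumes "0 \<le> b"
  shows "f b = lam * exp (integral {0..b} (\<lambda>w. lam * g (f w) - 1))"
proof -
  have "f b = f 0 * exp (integral {0..b} (\<lambda>w. lam * g (f w) - 1))"
  proof (rule linear_ode_exp_integral[OF assms])
    show "continuous_on {0..b} (\<lambda>w. lam * g (f w) - 1)"
      by (intro continuous_intros continuous_on_subset[OF continuous_on_f]) auto
    show "(f has_real_derivative f w * (lam * g (f w) - 1)) (at w within {0..b})"
      if "w \<in> {0..b}" for w
      using that by (intro DERIV_subset[OF f_deriv]) auto
  qed
  then show ?thesis
    by (simp add: f_0)
qed

lemma f_pos: "0 \<le> w \<Longrightarrow> 0 < f w"
  using f_eq_exp_integral lam_pos by simp

text \<open>The factor \<open>lam * g (f w) - 1\<close> of the derivative is negative as long as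
  \<open>f w \<le> lam\<close>, so \<open>f\<close> can never rise above its initial value \<open>lam\<close>.\<close>
lemma f_le_lam: "0 \<le> w \<Longrightarrow> f w \<le> lam"
proof (rule le_level_if_deriv_neg_at_or_below[OF f_deriv])
  fix v
  assume v: "0 \<le> v" "f v \<le> lam"
  have "lam * g (f v) \<le> lam"
    using mult_left_le[OF g_le_1, of "f v" lam] f_pos[OF v(1)] v lam_pos lam_less_1 by simp
  then show "f v * (lam * g (f v) - 1) < 0"
    using f_pos[OF v(1)] lam_less_1 by (simp add: mult_pos_neg)
qed (simp_all add: f_0)

lemma f_le_exp: "0 \<le> b \<Longrightarrow> f b \<le> lam * exp (- ((1 - lam) * b))"
proof -
  assume "0 \<le> b"
  have "integral {0..b} (\<lambda>w. lam * g (f w) - 1) \<le> integral {0..b} (\<lambda>_. lam - 1)"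
  proof (rule integral_le)
    show "(\<lambda>w. lam * g (f w) - 1) integrable_on {0..b}"
      by (intro integrable_continuous_real continuous_intros continuous_on_subset[OF continuous_on_f]) auto
    show "lam * g (f w) - 1 \<le> lam - 1" if "w \<in> {0..b}" for w
      using mult_left_le[OF g_le_1, of "f w" lam] f_pos[of w] f_le_lam[of w] that lam_pos lam_less_1
      by simp
  qed (rule integrable_const_ivl)
  then show ?thesis
    using f_eq_exp_integral[OF \<open>0 \<le> b\<close>] \<open>0 \<le> b\<close> lam_pos by (simp add: algebra_simps)
qed

lemma f_tendsto_0: "filterlim f (at_right 0) at_top"
proof (rule tendsto_imp_filterlim_at_right)
  have "((\<lambda>b. lam * exp (- ((1 - lam) * b))) \<longlongrightarrow> 0) at_top"
    using lam_pos lam_less_1 by real_asymp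
  then show "(f \<longlongrightarrow> 0) at_top"
    by (rule tendsto_sandwich[rotated 2, OF tendsto_const])
       (auto intro: eventually_mono[OF eventually_ge_at_top[of 0]] f_le_exp less_imp_le[OF f_pos])
  show "\<forall>\<^sub>F w in at_top. 0 < f w"
    using eventually_ge_at_top[of 0] by eventually_elim (rule f_pos)
qed

text \<open>\<open>- lam * wait_primitive lam \<circ> f\<close> is an antiderivative of \<open>T_LL d K lam \<circ> f\<close>: the factor
  \<open>lam * g (f w) - 1\<close> of \<open>f'\<close> cancels the denominator of the integrand.\<close>
lemma has_integral_T_LL_f:
  assumes "0 \<le> b"
  shows "((\<lambda>w. T_LL d K lam (f w)) has_integral
           lam * (wait_primitive lam lam - wait_primitive lam (f b))) {0..b}"
proof -
  have "((\<lambda>w. T_LL d K lam (f w)) has_integral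
          (- lam * wait_primitive lam (f b)) - (- lam * wait_primitive lam (f 0))) {0..b}"
  proof (rule fundamental_theorem_of_calculus[OF assms])
    fix w
    assume w: "w \<in> {0..b}"
    have fw: "0 < f w" "f w < 1"
      using f_pos[of w] f_le_lam[of w] w lam_less_1 by auto
    have "1 - lam \<le> 1 - lam * g (f w)"
      using one_minus_le_one_minus_mult_g[of lam "f w"] fw lam_pos by simp
    then have "1 - lam * g (f w) \<noteq> 0"
      using lam_less_1 by linarith
    then have "- lam * (g (f w) / (1 - lam * g (f w)) * (f w * (lam * g (f w) - 1)))
        = T_LL d K lam (f w)"
      by (simp add: T_LL_eq field_simps)
    moreover have "((\<lambda>w. - lam * wait_primitive lam (f w)) has_real_derivative
        - lam * (g (f w) / (1 - lam * g (f w)) * (f w * (lam * g (f w) - 1)))) (at w within {0..b})"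
      using w lam_pos lam_less_1 fw
      by (intro DERIV_cmult DERIV_chain2[OF wait_primitive_has_derivative]
            DERIV_subset[OF f_deriv]) auto
    ultimately show "((\<lambda>w. - lam * wait_primitive lam (f w)) has_vector_derivative
        T_LL d K lam (f w)) (at w within {0..b})"
      by (simp add: has_real_derivative_iff_has_vector_derivative)
  qed
  then show ?thesis
    by (simp add: f_0 algebra_simps)
qed

lemma mean_wait_eq: "mean_wait d K lam f = wait_primitive lam lam"
proof -
  have "((\<lambda>w. T_LL d K lam (f w)) has_integral lam * (wait_primitive lam lam - 0)) {0..}"
  proof (rule has_integral_to_inf)
    show "(\<lambda>w. T_LL d K lam (f w)) integrable_on {0..y}" for y
      using has_integral_T_LL_f[of y] by (cases "0 \<le> y") (auto simp: has_integral_integrable)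
    show "0 \<le> T_LL d K lam (f y)" if "0 \<le> y" for y
      using f_pos[OF that] f_le_lam[OF that] g_nonneg[of "f y"] lam_pos lam_less_1
      by (simp add: T_LL_eq)
    have "((\<lambda>y. lam * (wait_primitive lam lam - wait_primitive lam (f y)))
        \<longlongrightarrow> lam * (wait_primitive lam lam - 0)) at_top"
      using lam_pos lam_less_1
      by (intro tendsto_intros filterlim_compose[OF wait_primitive_tendsto_0 f_tendsto_0]) auto
    then show "((\<lambda>y. integral {0..y} (\<lambda>w. T_LL d K lam (f w)))
        \<longlongrightarrow> lam * (wait_primitive lam lam - 0)) at_top"
      by (rule Lim_transform_eventually)
         (auto intro: eventually_mono[OF eventually_ge_at_top[of 0]]
                simp: integral_unique[OF has_integral_T_LL_f])
  qed
  then show ?thesis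
    unfolding mean_wait_def using lam_pos by (simp add: integral_unique)
qed

end

section \<open>Light traffic\<close>

context LL_policy
begin

definition G :: "real \<Rightarrow> real" where
  "G x = integral {0..x} g"

lemma g_integrable: "g integrable_on {a..b}"
  by (intro integrable_continuous_real continuous_on_g[OF continuous_on_id])

lemma G_nonneg: "0 \<le> x \<Longrightarrow> x \<le> 1 \<Longrightarrow> 0 \<le> G x"
  unfolding G_def using g_nonneg by (intro integral_nonneg g_integrable) auto

lemma G_has_derivative:
  assumes "0 < x" "x < 1"
  shows "(G has_real_derivative g x) (at x)"
proof -
  have "(G has_real_derivative g x) (at x within {0..1})"
    unfolding G_def[abs_def] using assms
    by (intro integral_has_real_derivative continuous_on_g[OF continuous_on_id]) auto
  then show ?thesis
    using assms by (simp add: at_within_Icc_at)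
qed

lemma G_tendsto_0: "(G \<longlongrightarrow> 0) (at_right 0)"
proof -
  have "continuous_on {0..1} G"
    unfolding G_def[abs_def]
    by (intro indefinite_integral_continuous_1 g_integrable)
  then have "(G \<longlongrightarrow> G 0) (at 0 within {0..1})"
    unfolding continuous_on_def by simp
  then show ?thesis
    by (simp add: G_def at_within_Icc_at_right)
qed

lemma G_over_power_tendsto:
  "((\<lambda>x. G x / x ^ (d - K + 1)) \<longlongrightarrow> r 0 / real (d - K + 1)) (at_right 0)"
proof (rule lhopital_right_0[where f' = g and g' = "\<lambda>x. real (d - K + 1) * x ^ (d - K)"])
  note ev = eventually_in_unit_at_right_0
  show "(G \<longlongrightarrow> 0) (at_right 0)"
    by (rule G_tendsto_0)
  show "((\<lambda>x::real. x ^ (d - K + 1)) \<longlongrightarrow> 0) (at_right 0)"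
    by (auto intro!: tendsto_eq_intros)
  show "\<forall>\<^sub>F x in at_right 0. x ^ (d - K + 1) \<noteq> (0::real)"
    using ev by eventually_elim simp
  show "\<forall>\<^sub>F x in at_right 0. real (d - K + 1) * x ^ (d - K) \<noteq> (0::real)"
    using ev by eventually_elim simp
  show "\<forall>\<^sub>F x in at_right 0. (G has_real_derivative g x) (at x)"
    using ev by eventually_elim (auto intro: G_has_derivative)
  show "\<forall>\<^sub>F x in at_right 0. ((\<lambda>x. x ^ (d - K + 1)) has_real_derivative
                                 real (d - K + 1) * x ^ (d - K)) (at x)"
    using DERIV_pow[of "d - K + 1"] by simp
  have "((\<lambda>x. r x / real (d - K + 1)) \<longlongrightarrow> r 0 / real (d - K + 1)) (at_right 0)"
    by (intro tendsto_divide tendsto_const isCont_tendsto_compose[OF isCont_r] tendsto_ident_at) simp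
  moreover have "\<forall>\<^sub>F x in at_right 0. r x / real (d - K + 1) = g x / (real (d - K + 1) * x ^ (d - K))"
    using ev by eventually_elim (simp add: g_eq_power_mult_r)
  ultimately show "((\<lambda>x. g x / (real (d - K + 1) * x ^ (d - K))) \<longlongrightarrow> r 0 / real (d - K + 1)) (at_right 0)"
    by (rule Lim_transform_eventually)
qed

lemma G_over_mult_g_tendsto: "((\<lambda>x. G x / (x * g x)) \<longlongrightarrow> 1 / real (d - K + 1)) (at_right 0)"
proof -
  have "0 < r 0"
    by (rule r_pos) simp_all
  then have "((\<lambda>x. G x / x ^ (d - K + 1) / r x) \<longlongrightarrow> r 0 / real (d - K + 1) / r 0) (at_right 0)"
    by (intro tendsto_divide G_over_power_tendsto isCont_tendsto_compose[OF isCont_r] tendsto_ident_at) simp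
  moreover have "(\<lambda>x. G x / x ^ (d - K + 1) / r x) = (\<lambda>x. G x / (x * g x))"
    by (simp add: g_eq_power_mult_r mult.assoc)
  moreover have "r 0 / real (d - K + 1) / r 0 = 1 / real (d - K + 1)"
    using \<open>0 < r 0\<close> by simp
  ultimately show ?thesis
    by metis
qed

lemma G_le_wait_primitive:
  assumes "0 < x" "x < 1"
  shows "G x \<le> wait_primitive x x" "wait_primitive x x \<le> G x / (1 - x)"
proof -
  have "g u \<le> g u / (1 - x * g u) \<and> g u / (1 - x * g u) \<le> g u / (1 - x)" if "u \<in> {0..x}" for u
  proof
    have "1 - x \<le> 1 - x * g u" "0 \<le> g u" "g u \<le> 1"
      using that assms one_minus_le_one_minus_mult_g[of x u] g_nonneg[of u] g_le_1[of u] by auto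
    moreover from this have "0 < 1 - x * g u" "g u * (1 - x * g u) \<le> g u"
      using assms by (linarith, intro mult_left_le) auto
    moreover from calculation have "g u / (1 - x * g u) \<le> g u / (1 - x)"
      using assms by (intro divide_left_mono) auto
    ultimately show "g u \<le> g u / (1 - x * g u)" "g u / (1 - x * g u) \<le> g u / (1 - x)"
      by (simp_all add: le_divide_eq)
  qed
  moreover have "(\<lambda>u. g u / (1 - x * g u)) integrable_on {0..x}"
    using assms by (intro wait_integrand_integrable) auto
  ultimately show "G x \<le> wait_primitive x x" "wait_primitive x x \<le> G x / (1 - x)"
    unfolding G_def wait_primitive_def
    by (auto intro!: integral_le integrable_on_divide g_integrable simp flip: integral_divide)
qed

lemma wait_over_minus_ln_p_tendsto_0:
  "((\<lambda>x. wait_primitive x x / - ln (1 - x * g x)) \<longlongrightarrow> 1 / real (d - K + 1)) (at_right 0)"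
proof (rule tendsto_sandwich)
  note ev = eventually_in_unit_at_right_0
  have "G x / (x * g x) * (1 - x * g x) \<le> wait_primitive x x / - ln (1 - x * g x) \<and>
        wait_primitive x x / - ln (1 - x * g x) \<le> G x / (x * g x) / (1 - x)"
    if x: "0 < x" "x < 1" for x
  proof
    have "x * g x \<le> x"
      using x g_le_1[of x] by (intro mult_left_le) auto
    then have B: "0 < x * g x" "x * g x < 1"
      using x g_pos[of x] by (simp, linarith)
    have "0 \<le> G x"
      using x by (intro G_nonneg) auto
    note bounds = minus_ln_one_minus_bounds[OF B] G_le_wait_primitive[OF x] this
    have "G x / (x * g x / (1 - x * g x)) \<le> wait_primitive x x / - ln (1 - x * g x)"
      by (rule frac_le) (use bounds B in auto)
    then show "G x / (x * g x) * (1 - x * g x) \<le> wait_primitive x x / - ln (1 - x * g x)"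
      by simp
    have "wait_primitive x x / - ln (1 - x * g x) \<le> G x / (1 - x) / (x * g x)"
      by (rule frac_le) (use bounds B x in auto)
    then show "wait_primitive x x / - ln (1 - x * g x) \<le> G x / (x * g x) / (1 - x)"
      by (simp add: mult.commute)
  qed
  then show "\<forall>\<^sub>F x in at_right 0. G x / (x * g x) * (1 - x * g x) \<le> wait_primitive x x / - ln (1 - x * g x)"
       "\<forall>\<^sub>F x in at_right 0. wait_primitive x x / - ln (1 - x * g x) \<le> G x / (x * g x) / (1 - x)"
    by (auto intro: eventually_mono[OF ev])
  have "((\<lambda>x. x * g x) \<longlongrightarrow> 0 * g 0) (at_right 0)"
    by (intro tendsto_mult tendsto_ident_at isCont_tendsto_compose[OF isCont_g])
  then show "((\<lambda>x. G x / (x * g x) * (1 - x * g x)) \<longlongrightarrow> 1 / real (d - K + 1)) (at_right 0)"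
    using tendsto_mult[OF G_over_mult_g_tendsto tendsto_diff[OF tendsto_const]] by fastforce
  show "((\<lambda>x. G x / (x * g x) / (1 - x)) \<longlongrightarrow> 1 / real (d - K + 1)) (at_right 0)"
    using tendsto_divide[OF G_over_mult_g_tendsto tendsto_diff[OF tendsto_const tendsto_ident_at]]
    by fastforce
qed

end

section \<open>Heavy traffic\<close>

context LL_policy
begin

lemma minus_ln_p_over_minus_ln_tendsto_1:
  "((\<lambda>x. - ln (1 - x * g x) / - ln (1 - x)) \<longlongrightarrow> 1) (at_left 1)"
proof -
  have "((\<lambda>x. ln (1 + x * q x)) \<longlongrightarrow> ln (1 + 1 * q1)) (at_left 1)"
    by (intro tendsto_intros q_tendsto_at_left_1) (use q1_pos in auto)
  then have "((\<lambda>x. 1 - ln (1 + x * q x) / - ln (1 - x)) \<longlongrightarrow> 1 - 0) (at_left 1)"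
    by (intro tendsto_diff tendsto_const tendsto_divide_0
          filterlim_at_top_imp_at_infinity[OF minus_ln_one_minus_at_top])
  moreover have "\<forall>\<^sub>F x in at_left 1. 1 - ln (1 + x * q x) / - ln (1 - x) = - ln (1 - x * g x) / - ln (1 - x)"
    using eventually_in_unit_at_left_1
  proof eventually_elim
    case (elim x)
    then have x: "0 < x" "x < 1"
      by auto
    have "1 - x * g x = (1 - x) * (1 + x * q x)"
      using one_minus_mult_g_eq[of x x] x by (simp add: algebra_simps)
    moreover have "0 < 1 + x * q x"
      using q_nonneg[of x] x by (simp add: add_pos_nonneg)
    ultimately have "ln (1 - x * g x) = ln (1 - x) + ln (1 + x * q x)"
      using x by (simp add: ln_mult)
    moreover have "ln (1 - x) < 0"
      using x by simp
    ultimately show ?case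
      by (simp add: field_simps)
  qed
  ultimately show ?thesis
    by (simp add: tendsto_cong)
qed

lemma q_g_bounds_near_1:
  assumes "0 < e"
  obtains t where "0 < t" "t < 1"
    "\<And>u. t \<le> u \<Longrightarrow> u < 1 \<Longrightarrow> q1 - e \<le> q u \<and> q u \<le> q1 + e \<and> 1 - e \<le> g u"
proof -
  have "(g \<longlongrightarrow> 1) (at_left 1)"
    using isCont_g[of 1] by (simp add: g_1 isCont_def filterlim_at_split)
  then have "\<forall>\<^sub>F u in at_left 1. q1 - e < q u \<and> q u < q1 + e \<and> 1 - e < g u"
    using q_tendsto_at_left_1 assms
    by (auto intro!: eventually_conj order_tendstoD)
  then obtain b where "b < 1" and b: "\<And>u. b < u \<Longrightarrow> u < 1 \<Longrightarrow> q1 - e < q u \<and> q u < q1 + e \<and> 1 - e < g u"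
    unfolding eventually_at_left_field by blast
  show ?thesis
    by (rule that[of "(max b 0 + 1) / 2"]) (use \<open>b < 1\<close> b in \<open>auto simp: less_imp_le\<close>)
qed

lemma wait_primitive_split:
  assumes "0 \<le> t" "t \<le> x" "x < 1"
  shows "wait_primitive x x = wait_primitive x t + integral {t..x} (\<lambda>u. g u / (1 - x * g u))"
  unfolding wait_primitive_def using assms
  by (intro Henstock_Kurzweil_Integration.integral_combine[symmetric] wait_integrand_integrable) auto

lemma wait_primitive_nonneg:
  assumes "0 \<le> lam" "lam < 1" "0 \<le> x" "x \<le> 1"
  shows "0 \<le> wait_primitive lam x"
  unfolding wait_primitive_def
proof (rule integral_nonneg)
  show "(\<lambda>u. g u / (1 - lam * g u)) integrable_on {0..x}"
    using assms by (intro wait_integrand_integrable) auto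
  fix u
  assume "u \<in> {0..x}"
  then have "0 \<le> g u" "1 - lam \<le> 1 - lam * g u"
    using assms g_nonneg[of u] one_minus_le_one_minus_mult_g[of lam u] by auto
  then show "0 \<le> g u / (1 - lam * g u)"
    using assms by simp
qed

lemma wait_primitive_le_integral:
  assumes "0 \<le> t" "t \<le> x" "x < 1"
  shows "wait_primitive x t \<le> integral {0..t} (\<lambda>u. g u / (1 - g u))"
  unfolding wait_primitive_def
proof (rule integral_le)
  show "(\<lambda>u. g u / (1 - x * g u)) integrable_on {0..t}"
    using assms by (intro wait_integrand_integrable) auto
  have "continuous_on {0..t} (\<lambda>u. g u / (1 - g u))"
    using g_less_1 assms by (intro continuous_intros) fastforce+
  then show "(\<lambda>u. g u / (1 - g u)) integrable_on {0..t}"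
    by (rule integrable_continuous_real)
  fix u
  assume "u \<in> {0..t}"
  then have "0 \<le> g u" "g u < 1" "x * g u \<le> g u"
    using assms g_nonneg[of u] g_less_1[of u] by (auto intro: mult_left_le_one_le)
  then show "g u / (1 - x * g u) \<le> g u / (1 - g u)"
    by (intro divide_left_mono) auto
qed

text \<open>On \<open>[t, x]\<close> the denominator \<open>1 - x g u = (1 - x) + x (1 - u) q u\<close> is compared with
  \<open>(1 - x) + b (1 - u)\<close> for a constant \<open>b\<close> near \<open>q1\<close>, whose reciprocal integrates to
  \<open>- ln (1 - x) / b + O(1)\<close>.\<close>
lemma wait_tail_lower_bound:
  assumes e: "0 < e" "e < 1" and tx: "0 < t" "t < x" "x < 1"
    and near: "\<And>u. t \<le> u \<Longrightarrow> u < 1 \<Longrightarrow> q u \<le> q1 + e \<and> 1 - e \<le> g u"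
  shows "(1 - e) / (q1 + e) * (ln ((q1 + e) * (1 - t)) - ln (1 + (q1 + e)) - ln (1 - x))
           \<le> integral {t..x} (\<lambda>u. g u / (1 - x * g u))"
proof -
  define b where "b = q1 + e"
  have "0 < b"
    using q1_pos e by (simp add: b_def)
  have "(1 - e) * (1 / ((1 - x) + b * (1 - u))) \<le> g u / (1 - x * g u)" if "u \<in> {t..x}" for u
  proof -
    from that tx have u: "t \<le> u" "u < 1" "0 \<le> u"
      by auto
    have "x * ((1 - u) * q u) \<le> (1 - u) * q u"
      using q_nonneg[OF u(3,2)] tx u by (intro mult_left_le_one_le) auto
    also have "\<dots> \<le> (1 - u) * b"
      using near[OF u(1,2)] u by (intro mult_left_mono) (auto simp: b_def)
    finally have "1 - x * g u \<le> (1 - x) + b * (1 - u)"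
      using one_minus_mult_g_eq[OF u(2), of x] by (simp add: mult_ac)
    moreover have "1 - x \<le> 1 - x * g u"
      using one_minus_le_one_minus_mult_g[of x u] tx u by simp
    moreover from this have pos: "0 < 1 - x * g u"
      using tx by linarith
    ultimately have "(1 - e) / ((1 - x) + b * (1 - u)) \<le> (1 - e) / (1 - x * g u)"
      using e by (intro divide_left_mono) auto
    also have "\<dots> \<le> g u / (1 - x * g u)"
      using near[OF u(1,2)] pos by (intro divide_right_mono) auto
    finally show ?thesis
      by simp
  qed
  moreover have "((\<lambda>u. (1 - e) * (1 / ((1 - x) + b * (1 - u)))) has_integral
      (1 - e) * ((ln ((1 - x) + b * (1 - t)) - ln ((1 - x) + b * (1 - x))) / b)) {t..x}"
    using tx \<open>0 < b\<close> by (intro has_integral_mult_right has_integral_inverse_affine) auto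
  ultimately have "(1 - e) * ((ln ((1 - x) + b * (1 - t)) - ln ((1 - x) + b * (1 - x))) / b)
      \<le> integral {t..x} (\<lambda>u. g u / (1 - x * g u))"
    using tx by (intro has_integral_le[OF _ integrable_integral] wait_integrand_integrable) auto
  moreover have "ln (b * (1 - t)) \<le> ln ((1 - x) + b * (1 - t))"
    using \<open>0 < b\<close> tx by (subst ln_le_cancel_iff) (auto intro: add_pos_pos)
  moreover have "ln ((1 - x) + b * (1 - x)) = ln (1 - x) + ln (1 + b)"
    using \<open>0 < b\<close> tx ln_mult[of "1 - x" "1 + b"] by (simp add: algebra_simps)
  ultimately show ?thesis
    using e \<open>0 < b\<close> unfolding b_def[symmetric]
    by (smt (verit) divide_right_mono mult_left_mono times_divide_eq_left times_divide_eq_right)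
qed

lemma wait_tail_upper_bound:
  assumes e: "0 < e" "e < q1" and tx: "0 < t" "t < x" "x < 1"
    and near: "\<And>u. t \<le> u \<Longrightarrow> u < 1 \<Longrightarrow> q1 - e \<le> q u"
  shows "integral {t..x} (\<lambda>u. g u / (1 - x * g u)) \<le> - ln (1 - x) / (x * (q1 - e))"
proof -
  define b where "b = x * (q1 - e)"
  have "0 < b"
    using e tx by (simp add: b_def)
  have "g u / (1 - x * g u) \<le> 1 / ((1 - x) + b * (1 - u))" if "u \<in> {t..x}" for u
  proof -
    from that tx have u: "t \<le> u" "u < 1" "0 \<le> u"
      by auto
    have "b * (1 - u) \<le> x * (1 - u) * q u"
      using near[OF u(1,2)] tx u by (auto simp: b_def mult_ac intro: mult_left_mono)
    then have "(1 - x) + b * (1 - u) \<le> 1 - x * g u"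
      using one_minus_mult_g_eq[OF u(2), of x] by simp
    moreover have "0 < (1 - x) + b * (1 - u)"
      using \<open>0 < b\<close> tx u by (intro add_pos_nonneg) auto
    ultimately have "1 / (1 - x * g u) \<le> 1 / ((1 - x) + b * (1 - u))"
      by (intro divide_left_mono) auto
    moreover have "g u / (1 - x * g u) \<le> 1 / (1 - x * g u)"
      using g_le_1[of u] \<open>0 < (1 - x) + b * (1 - u)\<close> \<open>(1 - x) + b * (1 - u) \<le> 1 - x * g u\<close> u
      by (intro divide_right_mono) auto
    ultimately show ?thesis
      by linarith
  qed
  moreover have "((\<lambda>u. 1 / ((1 - x) + b * (1 - u))) has_integral
      (ln ((1 - x) + b * (1 - t)) - ln ((1 - x) + b * (1 - x))) / b) {t..x}"
    using tx \<open>0 < b\<close> by (intro has_integral_inverse_affine) auto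
  ultimately have "integral {t..x} (\<lambda>u. g u / (1 - x * g u))
      \<le> (ln ((1 - x) + b * (1 - t)) - ln ((1 - x) + b * (1 - x))) / b"
    using tx by (intro has_integral_le[OF integrable_integral] wait_integrand_integrable) auto
  moreover have "ln ((1 - x) + b * (1 - t)) \<le> ln (1 + b)"
  proof -
    have "b * (1 - t) \<le> b" "0 \<le> b * (1 - t)"
      using \<open>0 < b\<close> tx by (auto intro: mult_left_le)
    then show ?thesis
      using tx by simp
  qed
  moreover have "ln ((1 - x) + b * (1 - x)) = ln (1 - x) + ln (1 + b)"
    using \<open>0 < b\<close> tx ln_mult[of "1 - x" "1 + b"] by (simp add: algebra_simps)
  ultimately show ?thesis
    using \<open>0 < b\<close> unfolding b_def[symmetric]
    by (smt (verit) divide_right_mono)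
qed

lemma eventually_less_wait_over_minus_ln:
  assumes "c < 1 / q1"
  shows "\<forall>\<^sub>F x in at_left 1. c < wait_primitive x x / - ln (1 - x)"
proof -
  have "((\<lambda>e. (1 - e) / (q1 + e)) \<longlongrightarrow> (1 - 0) / (q1 + 0)) (at_right 0)"
    using q1_pos by (intro tendsto_divide tendsto_diff tendsto_add tendsto_const tendsto_ident_at) auto
  moreover have "c < (1 - 0) / (q1 + 0)"
    using assms by simp
  ultimately have "\<forall>\<^sub>F e in at_right 0. c < (1 - e) / (q1 + e)"
    by (rule order_tendstoD(1))
  from ex_small_if_eventually_at_right_0[OF this zero_less_one]
  obtain e where e: "0 < e" "e < 1" "c < (1 - e) / (q1 + e)"
    by blast
  obtain t where t: "0 < t" "t < 1"
    and near: "\<And>u. t \<le> u \<Longrightarrow> u < 1 \<Longrightarrow> q1 - e \<le> q u \<and> q u \<le> q1 + e \<and> 1 - e \<le> g u"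
    using q_g_bounds_near_1[OF e(1)] by metis
  define C where "C = ln ((q1 + e) * (1 - t)) - ln (1 + (q1 + e))"
  have "((\<lambda>x. (1 - e) / (q1 + e) * (1 + C / - ln (1 - x))) \<longlongrightarrow> (1 - e) / (q1 + e) * (1 + 0)) (at_left 1)"
    by (intro tendsto_mult tendsto_add tendsto_const divide_minus_ln_one_minus_tendsto_0)
  then have "\<forall>\<^sub>F x in at_left 1. c < (1 - e) / (q1 + e) * (1 + C / - ln (1 - x))"
    using e(3) by (intro order_tendstoD(1)) auto
  moreover have "\<forall>\<^sub>F x in at_left 1. x \<in> {t<..<1}"
    using eventually_at_left_real[OF t(2)] .
  ultimately show ?thesis
  proof eventually_elim
    case (elim x)
    then have x: "t < x" "x < 1" "0 < - ln (1 - x)"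
      using t by auto
    have "(1 - e) / (q1 + e) * (C - ln (1 - x)) \<le> wait_primitive x x"
      using wait_tail_lower_bound[OF e(1,2) t(1) x(1,2)] near wait_primitive_split[of t x]
        wait_primitive_nonneg[of x t] t x unfolding C_def by simp
    then have "(1 - e) / (q1 + e) * (C - ln (1 - x)) / - ln (1 - x) \<le> wait_primitive x x / - ln (1 - x)"
      using x(3) by (intro divide_right_mono) auto
    moreover have "(1 - e) / (q1 + e) * (C - ln (1 - x)) / - ln (1 - x)
        = (1 - e) / (q1 + e) * (1 + C / - ln (1 - x))"
      using x(3) by (simp add: divide_simps algebra_simps)
    ultimately have "(1 - e) / (q1 + e) * (1 + C / - ln (1 - x)) \<le> wait_primitive x x / - ln (1 - x)"
      by simp
    then show ?case
      using elim by linarith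
  qed
qed

lemma eventually_wait_over_minus_ln_less:
  assumes "1 / q1 < c"
  shows "\<forall>\<^sub>F x in at_left 1. wait_primitive x x / - ln (1 - x) < c"
proof -
  have "((\<lambda>e. 1 / (q1 - e)) \<longlongrightarrow> 1 / (q1 - 0)) (at_right 0)"
    using q1_pos by (intro tendsto_divide tendsto_diff tendsto_const tendsto_ident_at) auto
  moreover have "1 / (q1 - 0) < c"
    using assms by simp
  ultimately have "\<forall>\<^sub>F e in at_right 0. 1 / (q1 - e) < c"
    by (rule order_tendstoD(2))
  from ex_small_if_eventually_at_right_0[OF this q1_pos]
  obtain e where e: "0 < e" "e < q1" "1 / (q1 - e) < c"
    by blast
  obtain t where t: "0 < t" "t < 1"
    and near: "\<And>u. t \<le> u \<Longrightarrow> u < 1 \<Longrightarrow> q1 - e \<le> q u \<and> q u \<le> q1 + e \<and> 1 - e \<le> g u"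
    using q_g_bounds_near_1[OF e(1)] by metis
  define C where "C = integral {0..t} (\<lambda>u. g u / (1 - g u))"
  have "((\<lambda>x. C / - ln (1 - x) + 1 / (x * (q1 - e))) \<longlongrightarrow> 0 + 1 / (1 * (q1 - e))) (at_left 1)"
    using e by (intro tendsto_add tendsto_divide tendsto_mult tendsto_const tendsto_ident_at
          divide_minus_ln_one_minus_tendsto_0) auto
  then have "\<forall>\<^sub>F x in at_left 1. C / - ln (1 - x) + 1 / (x * (q1 - e)) < c"
    using e(3) by (intro order_tendstoD(2)) auto
  moreover have "\<forall>\<^sub>F x in at_left 1. x \<in> {t<..<1}"
    using eventually_at_left_real[OF t(2)] .
  ultimately show ?thesis
  proof eventually_elim
    case (elim x)
    then have x: "t < x" "x < 1" "0 < - ln (1 - x)"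
      using t by auto
    have "wait_primitive x x \<le> C + - ln (1 - x) / (x * (q1 - e))"
      using wait_tail_upper_bound[OF e(1,2) t(1) x(1,2)] near wait_primitive_split[of t x]
        wait_primitive_le_integral[of t x] t x unfolding C_def by simp
    then have "wait_primitive x x / - ln (1 - x) \<le> (C + - ln (1 - x) / (x * (q1 - e))) / - ln (1 - x)"
      using x(3) by (intro divide_right_mono) auto
    moreover have "(C + - ln (1 - x) / (x * (q1 - e))) / - ln (1 - x) = C / - ln (1 - x) + 1 / (x * (q1 - e))"
      using x e(2) t by (simp add: field_simps)
    ultimately have "wait_primitive x x / - ln (1 - x) \<le> C / - ln (1 - x) + 1 / (x * (q1 - e))"
      by simp
    then show ?case
      using elim by linarith
  qed
qed

lemma wait_over_minus_ln_p_tendsto_1: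
  "((\<lambda>x. wait_primitive x x / - ln (1 - x * g x)) \<longlongrightarrow> real K / real (d - K)) (at_left 1)"
proof -
  have "((\<lambda>x. wait_primitive x x / - ln (1 - x)) \<longlongrightarrow> 1 / q1) (at_left 1)"
    by (rule order_tendstoI[OF eventually_less_wait_over_minus_ln eventually_wait_over_minus_ln_less])
  then have "((\<lambda>x. (wait_primitive x x / - ln (1 - x)) / (- ln (1 - x * g x) / - ln (1 - x)))
      \<longlongrightarrow> (1 / q1) / 1) (at_left 1)"
    by (rule tendsto_divide[OF _ minus_ln_p_over_minus_ln_tendsto_1]) simp
  moreover have "\<forall>\<^sub>F x in at_left 1. (wait_primitive x x / - ln (1 - x)) / (- ln (1 - x * g x) / - ln (1 - x))
      = wait_primitive x x / - ln (1 - x * g x)"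
    using eventually_in_unit_at_left_1 by eventually_elim simp
  ultimately have "((\<lambda>x. wait_primitive x x / - ln (1 - x * g x)) \<longlongrightarrow> (1 / q1) / 1) (at_left 1)"
    by (rule Lim_transform_eventually)
  then show ?thesis
    by (simp add: q1_def)
qed

end

theorem proposition5p2:
  fixes d K :: nat and F :: "real \<Rightarrow> real \<Rightarrow> real"
  assumes "1 \<le> K" and "K < d"
    and F0: "\<And>lam. 0 < lam \<Longrightarrow> lam < 1 \<Longrightarrow> F lam 0 = lam"
    and Fode: "\<And>lam w. 0 < lam \<Longrightarrow> lam < 1 \<Longrightarrow> 0 \<le> w \<Longrightarrow>
       (F lam has_real_derivative (T_LL d K lam (F lam w) - F lam w)) (at w within {0..})"
  shows "(((\<lambda>lam. - mean_wait d K lam (F lam) / ln (p_idle d K lam))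
            \<longlongrightarrow> 1 / real (d - K + 1)) (at_right 0)) \<and>
         (((\<lambda>lam. - mean_wait d K lam (F lam) / ln (p_idle d K lam))
            \<longlongrightarrow> real K / real (d - K)) (at_left 1))"
proof -
  interpret LL_policy d K
    using assms(1,2) by unfold_locales
  have eq: "wait_primitive lam lam / - ln (1 - lam * g lam)
      = - mean_wait d K lam (F lam) / ln (p_idle d K lam)" if "lam \<in> {0<..<1}" for lam
  proof -
    interpret LL_trajectory d K lam "F lam"
      using assms that by unfold_locales auto
    show ?thesis
      by (simp add: mean_wait_eq p_idle_eq)
  qed
  show ?thesis
    using tendsto_cong[THEN iffD1, OF eventually_mono[OF eventually_in_unit_at_right_0 eq]
            wait_over_minus_ln_p_tendsto_0]
      tendsto_cong[THEN iffD1, OF eventually_mono[OF eventually_in_unit_at_left_1 eq]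
            wait_over_minus_ln_p_tendsto_1]
    by blast
qed

end
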